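(* Let $n\ge 1$, let $a>0$ be a scaling factor, and let $\alpha=(\alpha_1,\alpha_2,\dotsc)$ be a weak composition of $n$. Let $\operatorname{ord}\alpha$ denote the partition obtained by arranging the parts of $\alpha$ in weakly decreasing order. Let $f:\mathbb{R}_{\ge 0}\to\mathbb{R}_{\ge 0}$ be right-continuous and weakly decreasing with $f(x)\to 0$ as $x\to\infty$. Then \[ \|\rho_a(\operatorname{ord}\alpha)-f\|_\infty\le \|\rho_a(\alpha)-f\|_\infty, \] where $\|g\|_\infty=\sup\{|g(x)|:x\ge 0\}$.
   Context: A weak composition of $n$ is an infinite sequence $\alpha=(\alpha_1,\alpha_2,\dotsc)$ of nonnegative integers with $\sum_i\alpha_i=n$. Its diagram-boundary function is $\partial\alpha(x)=\alpha_{\lfloor x\rfloor+1}$ for $x\ge 0$. With scaling factor $a>0$ (row lengths multiplied by $1/a$, column heights by $a/n$), the rescaled diagram-boundary function is $\rho_a(\alpha)(x)=\frac{a}{n}\,\partial\alpha(ax)=\frac{a}{n}\alpha_{\lfloor ax\rfloor+1}$; the same definition applies to partitions (viewed as weakly decreasing weak compositions). *)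

theory Defs
  imports "HOL-Analysis.Analysis" "HOL-Library.Multiset"
begin

(* A weak composition alpha = (alpha_1, alpha_2, ...) is represented 0-indexed:
   the function  al :: nat => nat  with  al i = alpha_(i+1). *)
definition weak_composition :: "nat \<Rightarrow> (nat \<Rightarrow> nat) \<Rightarrow> bool" where
  "weak_composition n al \<longleftrightarrow> finite {i. al i \<noteq> 0} \<and> (\<Sum>i\<in>{i. al i \<noteq> 0}. al i) = n"

definition parts :: "(nat \<Rightarrow> nat) \<Rightarrow> nat multiset" where
  "parts al = image_mset al (mset_set {i. al i \<noteq> 0})"

definition ord_comp :: "(nat \<Rightarrow> nat) \<Rightarrow> (nat \<Rightarrow> nat)" where
  "ord_comp al i = (let L = rev (sorted_list_of_multiset (parts al)) in
                     if i < length L then L ! i else 0)"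

(* diagram-boundary function: partial alpha (x) = alpha_(floor x + 1) = al (floor x) *)
definition boundary :: "(nat \<Rightarrow> nat) \<Rightarrow> real \<Rightarrow> real" where
  "boundary al x = real (al (nat \<lfloor>x\<rfloor>))"

definition rho :: "nat \<Rightarrow> real \<Rightarrow> (nat \<Rightarrow> nat) \<Rightarrow> real \<Rightarrow> real" where
  "rho n a al x = (a / real n) * boundary al (a * x)"

definition supnorm :: "(real \<Rightarrow> real) \<Rightarrow> ereal" where
  "supnorm g = (SUP x\<in>{0::real..}. ereal \<bar>g x\<bar>)"

end

theory Submission
  imports Defs
begin

text \<open>Sorting does not change how many parts satisfy a given condition. Hence at most \<open>i\<close>
  parts of \<open>\<alpha>\<close> exceed \<open>(ord \<alpha>)\<^sub>i\<close>, while at least \<open>i + 1\<close> parts are \<open>\<ge> (ord \<alpha>)\<^sub>i\<close>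
  (counting the zero parts too). So \<open>(ord \<alpha>)\<^sub>i\<close> is dominated by some part of \<open>\<alpha>\<close> at or after
  position \<open>i\<close> and dominates some part at or before position \<open>i\<close>. For a weakly decreasing \<open>f\<close>,
  a positive deviation \<open>\<rho>\<^sub>a(ord \<alpha>)(x) - f(x)\<close> is therefore matched by at least as large a
  deviation of \<open>\<rho>\<^sub>a(\<alpha>)\<close> at some point \<open>y \<ge> x\<close>, and a negative one at some \<open>y \<le> x\<close>.\<close>

definition sorted_parts :: "(nat \<Rightarrow> nat) \<Rightarrow> nat list" where
  "sorted_parts al = rev (sorted_list_of_multiset (parts al))"

lemma ord_comp_eq_sorted_parts:
  "ord_comp al i = (if i < length (sorted_parts al) then sorted_parts al ! i else 0)"
  unfolding ord_comp_def sorted_parts_def Let_def ..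

lemma sorted_wrt_sorted_parts: "sorted_wrt (\<ge>) (sorted_parts al)"
  unfolding sorted_parts_def sorted_wrt_rev by simp

lemma length_filter_sorted_parts:
  assumes "finite {j. al j \<noteq> 0}"
  shows "length (filter P (sorted_parts al)) = card {j. al j \<noteq> 0 \<and> P (al j)}"
proof -
  have "length (filter P (sorted_parts al)) = size (filter_mset P (parts al))"
    unfolding sorted_parts_def by (metis mset_filter mset_rev mset_sorted_list_of_multiset size_mset)
  also have "\<dots> = card {j. al j \<noteq> 0 \<and> P (al j)}"
    using assms unfolding parts_def filter_mset_image_mset by simp
  finally show ?thesis .
qed

lemma card_parts_conv_card_sorted_parts:
  assumes "finite {j. al j \<noteq> 0}"
  shows "card {j. al j \<noteq> 0 \<and> P (al j)}
    = card {k. k < length (sorted_parts al) \<and> P (sorted_parts al ! k)}"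
  using length_filter_sorted_parts[OF assms, of P] by (simp add: length_filter_conv_card)

lemma length_sorted_parts:
  "finite {j. al j \<noteq> 0} \<Longrightarrow> length (sorted_parts al) = card {j. al j \<noteq> 0}"
  using length_filter_sorted_parts[of al "\<lambda>_. True"] by simp

lemma sorted_desc_card_ge_nth:
  fixes xs :: "'a::linorder list"
  assumes "sorted_wrt (\<ge>) xs" and "i < length xs"
  shows "i < card {k. k < length xs \<and> xs ! i \<le> xs ! k}"
proof -
  have "xs ! i \<le> xs ! k" if "k \<le> i" for k
    using that assms sorted_wrt_nth_less[OF assms(1), of k i] by (cases "k = i") auto
  then have "{..i} \<subseteq> {k. k < length xs \<and> xs ! i \<le> xs ! k}"
    using assms(2) by auto
  from card_mono[OF _ this] show ?thesis by simp
qed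

lemma sorted_desc_card_gt_nth:
  fixes xs :: "'a::linorder list"
  assumes "sorted_wrt (\<ge>) xs"
  shows "card {k. k < length xs \<and> xs ! i < xs ! k} \<le> i"
proof -
  have "k < i" if "k < length xs" and "xs ! i < xs ! k" for k
  proof (rule ccontr)
    assume "\<not> k < i"
    then have "xs ! k \<le> xs ! i"
      using that(1) sorted_wrt_nth_less[OF assms, of i k] by (cases "i = k") auto
    with that(2) show False by simp
  qed
  then have "{k. k < length xs \<and> xs ! i < xs ! k} \<subseteq> {..<i}" by auto
  from card_mono[OF _ this] show ?thesis by simp
qed

lemma card_gt_imp_ex_ge:
  fixes A :: "nat set"
  assumes "finite A" and "i < card A"
  shows "\<exists>j\<in>A. i \<le> j"
proof (rule ccontr)
  assume "\<not> ?thesis"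
  then have "A \<subseteq> {..<i}" by auto
  from card_mono[OF _ this] assms(2) show False by simp
qed

lemma card_le_imp_ex_le_notin:
  fixes A :: "nat set"
  assumes "finite A" and "card A \<le> i"
  shows "\<exists>j\<le>i. j \<notin> A"
proof (rule ccontr)
  assume "\<not> ?thesis"
  then have "{..i} \<subseteq> A" by auto
  from card_mono[OF assms(1) this] assms(2) show False by simp
qed

lemma ord_comp_le_later_part:
  assumes "finite {j. al j \<noteq> 0}"
  shows "\<exists>j\<ge>i. ord_comp al i \<le> al j"
proof (cases "i < length (sorted_parts al)")
  case True
  let ?xs = "sorted_parts al"
  have "i < card {j. al j \<noteq> 0 \<and> ?xs ! i \<le> al j}"
    unfolding card_parts_conv_card_sorted_parts[OF assms]
    using sorted_desc_card_ge_nth[OF sorted_wrt_sorted_parts True] .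
  then show ?thesis
    using card_gt_imp_ex_ge[of "{j. al j \<noteq> 0 \<and> ?xs ! i \<le> al j}"] assms True
    by (auto simp: ord_comp_eq_sorted_parts)
qed (auto simp: ord_comp_eq_sorted_parts)

lemma ord_comp_ge_earlier_part:
  assumes "finite {j. al j \<noteq> 0}"
  shows "\<exists>j\<le>i. al j \<le> ord_comp al i"
proof -
  let ?xs = "sorted_parts al" and ?b = "ord_comp al i"
  have "card {j. al j \<noteq> 0 \<and> ?b < al j} \<le> i"
  proof (cases "i < length ?xs")
    case True
    then show ?thesis
      unfolding card_parts_conv_card_sorted_parts[OF assms]
      using sorted_desc_card_gt_nth[OF sorted_wrt_sorted_parts, of al i]
      by (simp add: ord_comp_eq_sorted_parts)
  next
    case False
    then show ?thesis by (simp add: ord_comp_eq_sorted_parts length_sorted_parts[OF assms])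
  qed
  moreover have "finite {j. al j \<noteq> 0 \<and> ?b < al j}" using assms by simp
  ultimately obtain j where "j \<le> i" "j \<notin> {j. al j \<noteq> 0 \<and> ?b < al j}"
    using card_le_imp_ex_le_notin by blast
  then show ?thesis by (auto simp: not_less)
qed

lemma rho_eq: "rho n a al x = a / real n * real (al (nat \<lfloor>a * x\<rfloor>))"
  unfolding rho_def boundary_def ..

lemma ex_point_with_later_index:
  fixes a x :: real
  assumes "a > 0" and "nat \<lfloor>a * x\<rfloor> \<le> j"
  shows "\<exists>y\<ge>x. nat \<lfloor>a * y\<rfloor> = j"
proof (cases "nat \<lfloor>a * x\<rfloor> = j")
  case False
  then have "a * x \<le> real j"
    using assms(2) by linarith
  then have "x \<le> real j / a" using assms(1) by (simp add: field_simps)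
  then show ?thesis using assms(1) by (intro exI[of _ "real j / a"]) simp
qed auto

lemma ex_point_with_earlier_index:
  fixes a x :: real
  assumes "a > 0" and "x \<ge> 0" and "j \<le> nat \<lfloor>a * x\<rfloor>"
  shows "\<exists>y. 0 \<le> y \<and> y \<le> x \<and> nat \<lfloor>a * y\<rfloor> = j"
proof -
  have "0 \<le> a * x" using assms(1,2) by simp
  with assms(3) have "real j \<le> a * x" by linarith
  then have "real j / a \<le> x" using assms(1) by (simp add: field_simps)
  then show ?thesis using assms(1) by (intro exI[of _ "real j / a"]) simp
qed

lemma supnorm_le_of_pointwise_dominated:
  assumes "\<And>x. 0 \<le> x \<Longrightarrow> \<exists>y\<ge>0. \<bar>g x\<bar> \<le> \<bar>h y\<bar>"
  shows "supnorm g \<le> supnorm h"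
  unfolding supnorm_def
proof (rule SUP_least)
  fix x :: real assume "x \<in> {0..}"
  then obtain y where "y \<ge> 0" "\<bar>g x\<bar> \<le> \<bar>h y\<bar>" using assms by auto
  then show "ereal \<bar>g x\<bar> \<le> (SUP y\<in>{0..}. ereal \<bar>h y\<bar>)"
    by (intro SUP_upper2[of y]) auto
qed

lemma supnorm_rho_le_of_interlacing:
  assumes "a > 0" and antimono: "\<And>x y. 0 \<le> x \<Longrightarrow> x \<le> y \<Longrightarrow> f y \<le> f x"
    and later: "\<And>i. \<exists>j\<ge>i. b i \<le> al j" and earlier: "\<And>i. \<exists>j\<le>i. al j \<le> b i"
  shows "supnorm (\<lambda>x. rho n a b x - f x) \<le> supnorm (\<lambda>x. rho n a al x - f x)"
proof (rule supnorm_le_of_pointwise_dominated)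
  fix x :: real assume "0 \<le> x"
  define i where "i = nat \<lfloor>a * x\<rfloor>"
  have "a / real n \<ge> 0" using assms(1) by simp
  consider "f x \<le> rho n a b x" | "rho n a b x \<le> f x" by linarith
  then show "\<exists>y\<ge>0. \<bar>rho n a b x - f x\<bar> \<le> \<bar>rho n a al y - f y\<bar>"
  proof cases
    case 1
    obtain j where "i \<le> j" "b i \<le> al j" using later by blast
    obtain y where "x \<le> y" "nat \<lfloor>a * y\<rfloor> = j"
      using ex_point_with_later_index[OF assms(1)] \<open>i \<le> j\<close> i_def by blast
    have "\<bar>rho n a b x - f x\<bar> = a / real n * b i - f x"
      using 1 by (simp add: rho_eq i_def)
    also have "\<dots> \<le> a / real n * al j - f y"
      using \<open>b i \<le> al j\<close> \<open>a / real n \<ge> 0\<close> antimono[OF \<open>0 \<le> x\<close> \<open>x \<le> y\<close>]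
      by (smt (verit) mult_left_mono of_nat_mono)
    also have "\<dots> \<le> \<bar>rho n a al y - f y\<bar>"
      using \<open>nat \<lfloor>a * y\<rfloor> = j\<close> by (simp add: rho_eq)
    finally show ?thesis using \<open>0 \<le> x\<close> \<open>x \<le> y\<close> by (intro exI[of _ y]) simp
  next
    case 2
    obtain j where "j \<le> i" "al j \<le> b i" using earlier by blast
    obtain y where "0 \<le> y" "y \<le> x" "nat \<lfloor>a * y\<rfloor> = j"
      using ex_point_with_earlier_index[OF assms(1) \<open>0 \<le> x\<close>] \<open>j \<le> i\<close> i_def by blast
    have "\<bar>rho n a b x - f x\<bar> = f x - a / real n * b i"
      using 2 by (simp add: rho_eq i_def)
    also have "\<dots> \<le> f y - a / real n * al j"
      using \<open>al j \<le> b i\<close> \<open>a / real n \<ge> 0\<close> antimono[OF \<open>0 \<le> y\<close> \<open>y \<le> x\<close>]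
      by (smt (verit) mult_left_mono of_nat_mono)
    also have "\<dots> \<le> \<bar>rho n a al y - f y\<bar>"
      using \<open>nat \<lfloor>a * y\<rfloor> = j\<close> by (simp add: rho_eq)
    finally show ?thesis using \<open>0 \<le> y\<close> by blast
  qed
qed

theorem lemma1:
  fixes n :: nat and a :: real and al :: "nat \<Rightarrow> nat" and f :: "real \<Rightarrow> real"
  assumes "n \<ge> 1" and "a > 0" and "weak_composition n al"
    and "\<forall>x\<ge>0. f x \<ge> 0"
    and "\<forall>x\<ge>0. continuous (at_right x) f"
    and "\<forall>x y. 0 \<le> x \<longrightarrow> x \<le> y \<longrightarrow> f y \<le> f x"
    and "(f \<longlongrightarrow> 0) at_top"
  shows "supnorm (\<lambda>x. rho n a (ord_comp al) x - f x) \<le> supnorm (\<lambda>x. rho n a al x - f x)"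
proof (rule supnorm_rho_le_of_interlacing)
  have fin: "finite {j. al j \<noteq> 0}"
    using assms(3) unfolding weak_composition_def by simp
  show "\<exists>j\<ge>i. ord_comp al i \<le> al j" for i
    using ord_comp_le_later_part[OF fin] .
  show "\<exists>j\<le>i. al j \<le> ord_comp al i" for i
    using ord_comp_ge_earlier_part[OF fin] .
qed (use assms(2,6) in auto)

end
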